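(* Let $H_0,H_1$ be complex Hilbert spaces, $G$ a densely defined closed operator from $H_0$ into $H_1$ and $D$ a densely defined closed operator from $H_1$ into $H_0$ with $-G^*\subset D$. Let $H$ be a Hilbert space and $\kappa\in\mathcal L(\mathrm{BD}(G),H)$ injective with dense range. Let $a\in\mathcal L(H_1)$ and $m\in\mathcal L(H_0)$ be coercive. Define $\mathfrak b\colon\mathrm{dom}(G)\times\mathrm{dom}(G)\to\mathbb C$ by $\mathfrak b(u,v)=(aGu,Gv)_{H_1}+(mu,v)_{H_0}$ and $j\colon\mathrm{dom}(G)\to H$ by $j=\kappa\circ\pi_{\mathrm{BD}(G)}$. Then $\mathfrak b$ is coercive and continuous on $\mathrm{dom}(G)$, and the Dirichlet-to-Neumann operator $\Lambda_H$ in $H$ associated with $-DaG+m$ equals the operator associated with $(\mathfrak b,j)$.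
   Context: $\mathring D=-G^*$, $\mathring G=-D^*$. Domains carry graph inner products. $\mathrm{BD}(G)$ (resp. $\mathrm{BD}(D)$) is the orthogonal complement of $\mathrm{dom}(\mathring G)$ in $\mathrm{dom}(G)$ (resp. of $\mathrm{dom}(\mathring D)$ in $\mathrm{dom}(D)$) with induced inner products; $\pi_{\mathrm{BD}(G)},\pi_{\mathrm{BD}(D)}$ are the orthogonal projections. $G$ maps $\mathrm{BD}(G)$ into $\mathrm{BD}(D)$. Coercive operator: $\mathrm{Re}(Mx,x)\ge\mu\|x\|^2$ for some $\mu>0$; a form $\mathfrak b$ on a Hilbert space $V$ is coercive if $\mathrm{Re}\,\mathfrak b(v,v)\ge\mu\|v\|_V^2$ for some $\mu>0$. For coercive $a,m$ and $u_0\in\mathrm{BD}(G)$ there is a unique $u\in\mathrm{dom}(G)$ with $aGu\in\mathrm{dom}(D)$, $mu-DaGu=0$, $u-u_0\in\mathrm{dom}(\mathring G)$; set $\Lambda u_0=\pi_{\mathrm{BD}(D)}(aGu)$. $\Lambda_H$: $\varphi\in\mathrm{dom}(\Lambda_H)$, $\Lambda_H\varphi=\psi$ iff there exists $u_0\in\mathrm{BD}(G)$ with $\kappa(u_0)=\varphi$ and $\Lambda u_0=G\kappa^*\psi$ ($\kappa^*\colon H\to\mathrm{BD}(G)$ the adjoint). The operator $A$ associated with $(\mathfrak b,j)$: for $x,f\in H$, $x\in\mathrm{dom}(A)$ and $Ax=f$ iff there exists $u\in\mathrm{dom}(G)$ with $j(u)=x$ and $\mathfrak b(u,v)=(f,j(v))_H$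 for all $v\in\mathrm{dom}(G)$. *)

theory Defs
  imports "HOL-Analysis.Analysis"
begin

text \<open>The library has no complex vector spaces; we introduce them as a type class.
  The inner product is linear in the first and conjugate linear in the second argument.\<close>

class complex_inner = real_normed_vector +
  fixes scaleC :: "complex \<Rightarrow> 'a \<Rightarrow> 'a" (infixr "*\<^sub>C" 75)
  fixes cinner :: "'a \<Rightarrow> 'a \<Rightarrow> complex"
  assumes scaleC_add_right: "c *\<^sub>C (x + y) = c *\<^sub>C x + c *\<^sub>C y"
    and scaleC_add_left: "(b + c) *\<^sub>C x = b *\<^sub>C x + c *\<^sub>C x"
    and scaleC_scaleC: "b *\<^sub>C (c *\<^sub>C x) = (b * c) *\<^sub>C x"
    and scaleC_one: "1 *\<^sub>C x = x"
    and scaleR_scaleC: "scaleR r x = complex_of_real r *\<^sub>C x"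
    and cinner_commute: "cinner x y = cnj (cinner y x)"
    and cinner_add_left: "cinner (x + y) z = cinner x z + cinner y z"
    and cinner_scaleC_left: "cinner (c *\<^sub>C x) y = c * cinner x y"
    and cinner_self_real: "Im (cinner x x) = 0"
    and cinner_self_nonneg: "0 \<le> Re (cinner x x)"
    and cinner_self_eq_zero: "cinner x x = 0 \<longleftrightarrow> x = 0"
    and norm_eq_sqrt_cinner: "norm x = sqrt (Re (cinner x x))"

class chilbert = complex_inner + complete_space

definition csubspace :: "'a::complex_inner set \<Rightarrow> bool" where
  "csubspace S \<longleftrightarrow> 0 \<in> S \<and> (\<forall>x\<in>S. \<forall>y\<in>S. x + y \<in> S) \<and> (\<forall>c. \<forall>x\<in>S. c *\<^sub>C x \<in> S)"

definition clinear_on :: "'a::complex_inner set \<Rightarrow> ('a \<Rightarrow> 'b::complex_inner) \<Rightarrow> bool" where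
  "clinear_on S f \<longleftrightarrow> (\<forall>x\<in>S. \<forall>y\<in>S. f (x + y) = f x + f y) \<and> (\<forall>c. \<forall>x\<in>S. f (c *\<^sub>C x) = c *\<^sub>C f x)"

text \<open>A (possibly unbounded) linear operator is given by a domain and a function;
  values outside the domain are irrelevant.\<close>

definition lin_op :: "'a::complex_inner set \<Rightarrow> ('a \<Rightarrow> 'b::complex_inner) \<Rightarrow> bool" where
  "lin_op S T \<longleftrightarrow> csubspace S \<and> clinear_on S T"

definition densely_defined :: "'a::complex_inner set \<Rightarrow> ('a \<Rightarrow> 'b::complex_inner) \<Rightarrow> bool" where
  "densely_defined S T \<longleftrightarrow> lin_op S T \<and> closure S = UNIV"

definition closed_op :: "'a::complex_inner set \<Rightarrow> ('a \<Rightarrow> 'b::complex_inner) \<Rightarrow> bool" where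
  "closed_op S T \<longleftrightarrow> closed {(x, T x) | x. x \<in> S}"

definition adj_dom :: "'a::complex_inner set \<Rightarrow> ('a \<Rightarrow> 'b::complex_inner) \<Rightarrow> 'b set" where
  "adj_dom S T = {y. \<exists>z. \<forall>x\<in>S. cinner (T x) y = cinner x z}"

definition adj :: "'a::complex_inner set \<Rightarrow> ('a \<Rightarrow> 'b::complex_inner) \<Rightarrow> 'b \<Rightarrow> 'a" where
  "adj S T y = (THE z. \<forall>x\<in>S. cinner (T x) y = cinner x z)"

definition graph_inner :: "('a::complex_inner \<Rightarrow> 'b::complex_inner) \<Rightarrow> 'a \<Rightarrow> 'a \<Rightarrow> complex" where
  "graph_inner T x y = cinner x y + cinner (T x) (T y)"

definition graph_norm :: "('a::complex_inner \<Rightarrow> 'b::complex_inner) \<Rightarrow> 'a \<Rightarrow> real" where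
  "graph_norm T x = sqrt (Re (graph_inner T x x))"

definition orth_proj :: "('a::complex_inner \<Rightarrow> 'b::complex_inner) \<Rightarrow> 'a set \<Rightarrow> 'a \<Rightarrow> 'a" where
  "orth_proj T V u = (THE p. p \<in> V \<and> (\<forall>w\<in>V. graph_inner T (u - p) w = 0))"

text \<open>Given G and D with -G^* \<subseteq> D: the ring operators are
  D0 = -G^* with domain dom(G^*) and G0 = -D^* with domain dom(D^*).\<close>

definition BD_G :: "'h0::complex_inner set \<Rightarrow> ('h0 \<Rightarrow> 'h1::complex_inner) \<Rightarrow> 'h1 set \<Rightarrow> ('h1 \<Rightarrow> 'h0) \<Rightarrow> 'h0 set" where
  "BD_G domG G domD D = {u \<in> domG. \<forall>v \<in> adj_dom domD D. graph_inner G u v = 0}"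

definition BD_D :: "'h0::complex_inner set \<Rightarrow> ('h0 \<Rightarrow> 'h1::complex_inner) \<Rightarrow> 'h1 set \<Rightarrow> ('h1 \<Rightarrow> 'h0) \<Rightarrow> 'h1 set" where
  "BD_D domG G domD D = {w \<in> domD. \<forall>v \<in> adj_dom domG G. graph_inner D w v = 0}"

definition cbounded_linear :: "('a::complex_inner \<Rightarrow> 'b::complex_inner) \<Rightarrow> bool" where
  "cbounded_linear f \<longleftrightarrow> clinear_on UNIV f \<and> (\<exists>K. \<forall>x. norm (f x) \<le> K * norm x)"

definition coercive_op :: "('a::complex_inner \<Rightarrow> 'a) \<Rightarrow> bool" where
  "coercive_op M \<longleftrightarrow> (\<exists>\<mu>>0. \<forall>x. Re (cinner (M x) x) \<ge> \<mu> * (norm x)\<^sup>2)"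

definition coercive_form :: "'a set \<Rightarrow> ('a::complex_inner \<Rightarrow> 'b::complex_inner) \<Rightarrow> ('a \<Rightarrow> 'a \<Rightarrow> complex) \<Rightarrow> bool" where
  "coercive_form V T b \<longleftrightarrow> (\<exists>\<mu>>0. \<forall>v\<in>V. Re (b v v) \<ge> \<mu> * (graph_norm T v)\<^sup>2)"

definition continuous_form :: "'a set \<Rightarrow> ('a::complex_inner \<Rightarrow> 'b::complex_inner) \<Rightarrow> ('a \<Rightarrow> 'a \<Rightarrow> complex) \<Rightarrow> bool" where
  "continuous_form V T b \<longleftrightarrow> (\<exists>C. \<forall>u\<in>V. \<forall>v\<in>V. norm (b u v) \<le> C * graph_norm T u * graph_norm T v)"

definition dtn_sol where
  "dtn_sol domG G domD D a m u0 =
     (THE u. u \<in> domG \<and> a (G u) \<in> domD \<and> m u - D (a (G u)) = 0 \<and> u - u0 \<in> adj_dom domD D)"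

definition dtn_Lambda where
  "dtn_Lambda domG G domD D a m u0 =
     orth_proj D (BD_D domG G domD D) (a (G (dtn_sol domG G domD D a m u0)))"

definition kappa_adj where
  "kappa_adj domG G domD D \<kappa> \<psi> =
     (THE w. w \<in> BD_G domG G domD D \<and> (\<forall>u \<in> BD_G domG G domD D. cinner (\<kappa> u) \<psi> = graph_inner G u w))"

definition dtn_H :: "'h0::complex_inner set \<Rightarrow> ('h0 \<Rightarrow> 'h1::complex_inner) \<Rightarrow> 'h1 set \<Rightarrow> ('h1 \<Rightarrow> 'h0)
    \<Rightarrow> ('h1 \<Rightarrow> 'h1) \<Rightarrow> ('h0 \<Rightarrow> 'h0) \<Rightarrow> ('h0 \<Rightarrow> 'h::complex_inner) \<Rightarrow> 'h \<Rightarrow> 'h \<Rightarrow> bool" where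
  "dtn_H domG G domD D a m \<kappa> \<phi> \<psi> \<longleftrightarrow>
     (\<exists>u0 \<in> BD_G domG G domD D. \<kappa> u0 = \<phi> \<and>
        dtn_Lambda domG G domD D a m u0 = G (kappa_adj domG G domD D \<kappa> \<psi>))"

definition form_op :: "'v set \<Rightarrow> ('v \<Rightarrow> 'v \<Rightarrow> complex) \<Rightarrow> ('v \<Rightarrow> 'h::complex_inner) \<Rightarrow> 'h \<Rightarrow> 'h \<Rightarrow> bool" where
  "form_op V b j x f \<longleftrightarrow> (\<exists>u\<in>V. j u = x \<and> (\<forall>v\<in>V. b u v = cinner f (j v)))"

end

theory Submission
  imports Defs
begin

text \<open>Decompose \<open>dom(G)\<close> orthogonally, in the graph inner product, as \<open>dom(G\<^sub>0) \<oplus> BD(G)\<close>;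
  \<open>G\<^sub>0 = -D\<^sup>*\<close> is a restriction of \<open>G\<close> because \<open>G\<close> is closed and \<open>-G\<^sup>* \<subseteq> D\<close>. An element
  \<open>u \<in> dom(G)\<close> with \<open>b(u, v) = 0\<close> for all \<open>v \<in> dom(G\<^sub>0)\<close> is exactly a solution of
  \<open>m u - D a G u = 0\<close>, and the Lax-Milgram lemma on \<open>dom(G\<^sub>0)\<close> provides one with any
  prescribed boundary part \<open>u\<^sub>0 \<in> BD(G)\<close>. \<open>G\<close> maps \<open>BD(G)\<close> isometrically onto \<open>BD(D)\<close>
  with inverse \<open>D\<close>, and Green's formula turns the \<open>BD(D)\<close>-inner product of the Neumann
  data \<open>\<Lambda> u\<^sub>0\<close> with \<open>G v\<close>, \<open>v \<in> BD(G)\<close>, into \<open>b(u, v)\<close>. Hence \<open>\<Lambda> u\<^sub>0 = G \<kappa>\<^sup>* \<psi>\<close> says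
  \<open>b(u, v) = (\<psi>, \<kappa> v)\<close> for \<open>v \<in> BD(G)\<close>, which is the identity defining the operator
  associated with \<open>(b, j)\<close> once \<open>v \<in> dom(G)\<close> is split into its two components.\<close>

section \<open>Complex inner product spaces\<close>

lemma scaleC_zero_left [simp]: "0 *\<^sub>C (x::'a::complex_inner) = 0"
  by (metis scaleR_scaleC scaleR_zero_left of_real_0)

lemma scaleC_minus1: "(-1) *\<^sub>C x = - x"
  by (metis scaleR_scaleC scaleR_minus1_left of_real_minus of_real_1)

lemma cinner_add_right: "cinner x (y + z) = cinner x y + cinner x z"
  by (metis cinner_commute cinner_add_left complex_cnj_add)

lemma cinner_scaleC_right: "cinner x (c *\<^sub>C y) = cnj c * cinner x y"
  by (metis cinner_commute cinner_scaleC_left complex_cnj_mult)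

lemma cinner_zero_left [simp]: "cinner 0 y = 0"
  by (metis scaleC_zero_left cinner_scaleC_left mult_zero_left)

lemma cinner_zero_right [simp]: "cinner x 0 = 0"
  by (metis cinner_commute cinner_zero_left complex_cnj_zero)

lemma cinner_minus_left: "cinner (- x) y = - cinner x y"
  by (metis scaleC_minus1 cinner_scaleC_left mult_minus1)

lemma cinner_minus_right: "cinner x (- y) = - cinner x y"
  by (metis cinner_commute cinner_minus_left complex_cnj_minus)

lemma cinner_diff_left: "cinner (x - y) z = cinner x z - cinner y z"
  by (metis cinner_add_left cinner_minus_left diff_conv_add_uminus)

lemma cinner_diff_right: "cinner x (y - z) = cinner x y - cinner x z"
  by (metis cinner_add_right cinner_minus_right diff_conv_add_uminus)

lemma cinner_scaleR_right: "cinner x (scaleR r y) = of_real r * cinner x y"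
  by (simp add: scaleR_scaleC cinner_scaleC_right)

lemma Re_cinner_commute: "Re (cinner y x) = Re (cinner x y)"
  by (subst cinner_commute) simp

lemma norm_sq_cinner: "(norm x)\<^sup>2 = Re (cinner x x)"
  by (simp add: norm_eq_sqrt_cinner cinner_self_nonneg)

lemma cinner_self_norm: "cinner x x = of_real ((norm x)\<^sup>2)"
  by (simp add: complex_eq_iff cinner_self_real norm_sq_cinner)

lemma norm_diff_sq: "(norm (x - y))\<^sup>2 = (norm x)\<^sup>2 + (norm y)\<^sup>2 - 2 * Re (cinner x y)"
proof -
  have "cinner (x - y) (x - y) = cinner x x + cinner y y - (cinner x y + cinner y x)"
    by (simp add: cinner_diff_left cinner_diff_right algebra_simps)
  then show ?thesis by (simp add: norm_sq_cinner Re_cinner_commute[of y x])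
qed

lemma parallelogram_law:
  "(norm (x + y))\<^sup>2 + (norm (x - y))\<^sup>2 = 2 * (norm x)\<^sup>2 + 2 * (norm y)\<^sup>2"
  for x y :: "'a::complex_inner"
  using norm_diff_sq[of x "-y"] norm_diff_sq[of x y] by (simp add: cinner_minus_right)

lemma norm_scaleC: "norm (c *\<^sub>C (x::'a::complex_inner)) = cmod c * norm x"
proof -
  have "cinner (c *\<^sub>C x) (c *\<^sub>C x) = (c * cnj c) * cinner x x"
    by (simp add: cinner_scaleC_left cinner_scaleC_right mult.assoc)
  also have "\<dots> = of_real ((cmod c)\<^sup>2 * (norm x)\<^sup>2)"
    by (simp add: complex_norm_square[symmetric] cinner_self_norm)
  finally show ?thesis
    by (simp add: norm_eq_sqrt_cinner[of "c *\<^sub>C x"] real_sqrt_mult norm_sq_cinner[symmetric])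
qed

lemma cauchy_schwarz: "norm (cinner x y) \<le> norm x * norm y"
proof (cases "y = 0")
  case True then show ?thesis by simp
next
  case False
  define c where "c = cinner x y"
  define r where "r = (norm y)\<^sup>2"
  have r0: "r > 0" using False by (simp add: r_def)
  define t where "t = c / of_real r"
  \<comment> \<open>expand \<open>0 \<le> \<parallel>x - t y\<parallel>\<^sup>2\<close> for the minimising coefficient \<open>t\<close>\<close>
  have "cmod t = cmod c / r" using r0 by (simp add: t_def norm_divide)
  then have "(norm (t *\<^sub>C y))\<^sup>2 = (cmod c / r)\<^sup>2 * r"
    by (simp only: norm_scaleC power_mult_distrib r_def)
  then have "(norm (t *\<^sub>C y))\<^sup>2 = (cmod c)\<^sup>2 / r"
    using r0 by (simp add: power2_eq_square)
  moreover have "cinner x (t *\<^sub>C y) = of_real ((cmod c)\<^sup>2 / r)"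
    by (simp add: cinner_scaleC_right c_def[symmetric] t_def mult.commute[of _ c]
        complex_norm_square[symmetric])
  ultimately have "0 \<le> (norm x)\<^sup>2 - (cmod c)\<^sup>2 / r"
    using norm_diff_sq[of x "t *\<^sub>C y"] zero_le_power2[of "norm (x - t *\<^sub>C y)"] by simp
  then have "(cmod c)\<^sup>2 \<le> (norm x * norm y)\<^sup>2"
    using r0 by (simp add: field_simps r_def power_mult_distrib)
  then show ?thesis unfolding c_def by (meson norm_ge_zero power2_le_imp_le zero_le_mult_iff)
qed

lemma bounded_bilinear_cinner: "bounded_bilinear (cinner :: 'a::complex_inner \<Rightarrow> 'a \<Rightarrow> complex)"
proof
  fix a a' b b' :: 'a and r :: real
  show "cinner (a + a') b = cinner a b + cinner a' b" by (rule cinner_add_left)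
  show "cinner a (b + b') = cinner a b + cinner a b'" by (rule cinner_add_right)
  show "cinner (r *\<^sub>R a) b = r *\<^sub>R cinner a b"
    by (simp add: scaleR_scaleC cinner_scaleC_left scaleR_conv_of_real)
  show "cinner a (r *\<^sub>R b) = r *\<^sub>R cinner a b" by (simp add: cinner_scaleR_right scaleR_conv_of_real)
  show "\<exists>K. \<forall>a b::'a. norm (cinner a b) \<le> norm a * norm b * K"
    using cauchy_schwarz by (metis mult.right_neutral)
qed

lemmas continuous_on_cinner = bounded_bilinear.continuous_on[OF bounded_bilinear_cinner]

lemma closed_cinner_eq: "closed {x::'a::complex_inner. cinner x y = c}"
  by (intro closed_Collect_eq continuous_on_cinner continuous_on_id continuous_on_const)

lemma orthogonal_dense_eq_0:
  fixes d :: "'a::complex_inner"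
  assumes "closure S = UNIV" "\<And>x. x \<in> S \<Longrightarrow> cinner x d = 0"
  shows "d = 0"
proof -
  have "closure S \<subseteq> {x. cinner x d = 0}"
    using assms(2) closed_cinner_eq by (intro closure_minimal) auto
  then show ?thesis using assms(1) cinner_self_eq_zero by blast
qed

instantiation prod :: (complex_inner, complex_inner) complex_inner
begin
definition scaleC_prod_def: "c *\<^sub>C x = (c *\<^sub>C fst x, c *\<^sub>C snd x)"
definition cinner_prod_def: "cinner x y = cinner (fst x) (fst y) + cinner (snd x) (snd y)"
instance proof
  fix x y z :: "'a \<times> 'b" and b c :: complex and r :: real
  show "c *\<^sub>C (x + y) = c *\<^sub>C x + c *\<^sub>C y" by (simp add: scaleC_prod_def scaleC_add_right)
  show "(b + c) *\<^sub>C x = b *\<^sub>C x + c *\<^sub>C x" by (simp add: scaleC_prod_def scaleC_add_left)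
  show "b *\<^sub>C (c *\<^sub>C x) = (b * c) *\<^sub>C x" by (simp add: scaleC_prod_def scaleC_scaleC)
  show "1 *\<^sub>C x = x" by (simp add: scaleC_prod_def scaleC_one)
  show "r *\<^sub>R x = complex_of_real r *\<^sub>C x" by (simp add: scaleC_prod_def scaleR_scaleC prod_eq_iff)
  show "cinner x y = cnj (cinner y x)" by (simp add: cinner_prod_def) (metis cinner_commute)
  show "cinner (x + y) z = cinner x z + cinner y z" by (simp add: cinner_prod_def cinner_add_left)
  show "cinner (c *\<^sub>C x) y = c * cinner x y"
    by (simp add: cinner_prod_def scaleC_prod_def cinner_scaleC_left distrib_left)
  show "Im (cinner x x) = 0" by (simp add: cinner_prod_def cinner_self_real)
  show "0 \<le> Re (cinner x x)" by (simp add: cinner_prod_def cinner_self_nonneg)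
  show "(cinner x x = 0) = (x = 0)"
  proof
    assume "cinner x x = 0"
    then have "Re (cinner (fst x) (fst x) + cinner (snd x) (snd x)) = 0"
      by (simp add: cinner_prod_def)
    then have "Re (cinner (fst x) (fst x)) + Re (cinner (snd x) (snd x)) = 0"
      by simp
    then have "cinner (fst x) (fst x) = 0" "cinner (snd x) (snd x) = 0"
      using cinner_self_nonneg[of "fst x"] cinner_self_nonneg[of "snd x"]
      by (simp_all add: cinner_self_norm)
    then show "x = 0" by (simp add: cinner_self_eq_zero prod_eq_iff)
  qed (simp add: cinner_prod_def)
  show "norm x = sqrt (Re (cinner x x))" by (simp add: norm_prod_def cinner_prod_def norm_sq_cinner)
qed
end

instance prod :: (chilbert, chilbert) chilbert ..

lemma cinner_Pair: "cinner (a, b) (c, d) = cinner a c + cinner b d"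
  by (simp add: cinner_prod_def)

section \<open>Projections, Riesz representation and the Lax-Milgram lemma\<close>

lemma csubspace_0: "csubspace M \<Longrightarrow> 0 \<in> M"
  by (simp add: csubspace_def)

lemma csubspace_add: "csubspace M \<Longrightarrow> x \<in> M \<Longrightarrow> y \<in> M \<Longrightarrow> x + y \<in> M"
  by (simp add: csubspace_def)

lemma csubspace_scaleC: "csubspace M \<Longrightarrow> x \<in> M \<Longrightarrow> c *\<^sub>C x \<in> M"
  by (simp add: csubspace_def)

lemma csubspace_diff: "csubspace M \<Longrightarrow> x \<in> M \<Longrightarrow> y \<in> M \<Longrightarrow> x - y \<in> M"
  by (metis csubspace_add csubspace_scaleC scaleC_minus1 diff_conv_add_uminus)

lemma csubspace_scaleR: "csubspace M \<Longrightarrow> x \<in> M \<Longrightarrow> r *\<^sub>R x \<in> M"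
  by (metis csubspace_scaleC scaleR_scaleC)

lemma nearest_point_orthogonal:
  assumes sub: "csubspace M" and pM: "p \<in> M"
    and nearest: "\<And>y. y \<in> M \<Longrightarrow> norm (x - p) \<le> norm (x - y)"
    and yM: "y \<in> M"
  shows "cinner (x - p) y = 0"
proof -
  define c where "c = cinner (x - p) y"
  define s where "s = 1 / ((norm y)\<^sup>2 + 1)"
  have ny: "0 < (norm y)\<^sup>2 + 1" by (simp add: add_nonneg_pos)
  then have s0: "0 < s" by (simp add: s_def)
  have sy: "s * (norm y)\<^sup>2 < 1" using ny by (simp add: s_def divide_less_eq)
  \<comment> \<open>move from \<open>p\<close> towards \<open>p + c y\<close> by a step small enough to decrease the distance unless \<open>c = 0\<close>\<close>
  have "p + (complex_of_real s * c) *\<^sub>C y \<in> M"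
    using pM yM sub by (simp add: csubspace_add csubspace_scaleC)
  from nearest[OF this]
  have "(norm (x - p))\<^sup>2 \<le> (norm ((x - p) - (complex_of_real s * c) *\<^sub>C y))\<^sup>2"
    by (simp add: algebra_simps power_mono)
  also have "\<dots> = (norm (x - p))\<^sup>2 + (s * cmod c)\<^sup>2 * (norm y)\<^sup>2 - 2 * s * (cmod c)\<^sup>2"
  proof -
    have "cinner (x - p) ((complex_of_real s * c) *\<^sub>C y) = of_real (s * (cmod c)\<^sup>2)"
      by (simp add: cinner_scaleC_right c_def[symmetric] mult.assoc mult.commute[of "cnj c"]
          complex_norm_square[symmetric])
    then show ?thesis using s0 by (simp add: norm_diff_sq norm_scaleC norm_mult power_mult_distrib)
  qed
  finally have "0 \<le> s * (cmod c)\<^sup>2 * (s * (norm y)\<^sup>2 - 2)"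
    by (simp add: power_mult_distrib algebra_simps power2_eq_square)
  with sy s0 have "cmod c = 0" by (simp add: mult_le_0_iff zero_le_mult_iff)
  then show ?thesis unfolding c_def by simp
qed

lemma midpoint_dist_bound:
  assumes sub: "csubspace M" and inf: "\<And>z. z \<in> M \<Longrightarrow> d \<le> norm (x - z)" and d0: "0 \<le> d"
    and yM: "y \<in> M" "y' \<in> M"
  shows "(norm (y - y'))\<^sup>2 \<le> 2 * (norm (x - y))\<^sup>2 + 2 * (norm (x - y'))\<^sup>2 - 4 * d\<^sup>2"
proof -
  have "(1/2) *\<^sub>R (y + y') \<in> M" using yM sub by (simp add: csubspace_add csubspace_scaleR)
  then have "d\<^sup>2 \<le> (norm (x - (1/2) *\<^sub>R (y + y')))\<^sup>2" using inf d0 by (simp add: power_mono)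
  also have "(x - y) + (x - y') = 2 *\<^sub>R (x - (1/2) *\<^sub>R (y + y'))"
    by (simp add: algebra_simps scaleR_2)
  then have "(norm (x - (1/2) *\<^sub>R (y + y')))\<^sup>2 = (norm ((x - y) + (x - y')))\<^sup>2 / 4"
    by (simp add: power_mult_distrib)
  finally show ?thesis
    using parallelogram_law[of "x - y" "x - y'"] by (simp add: norm_minus_commute)
qed

lemma nearest_point_exists:
  fixes M :: "'a::chilbert set"
  assumes sub: "csubspace M" and cl: "closed M"
  obtains p where "p \<in> M" "\<And>y. y \<in> M \<Longrightarrow> norm (x - p) \<le> norm (x - y)"
proof -
  define d where "d = Inf ((\<lambda>y. norm (x - y)) ` M)"
  have ne: "(\<lambda>y. norm (x - y)) ` M \<noteq> {}" using csubspace_0[OF sub] by blast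
  have dle: "d \<le> norm (x - y)" if "y \<in> M" for y
    unfolding d_def using that by (intro cInf_lower bdd_belowI[of _ 0]) auto
  have d0: "0 \<le> d" unfolding d_def by (rule cInf_greatest[OF ne]) auto
  have "\<exists>y\<in>M. (norm (x - y))\<^sup>2 < d\<^sup>2 + 1 / real (Suc n)" for n
  proof -
    have "d < sqrt (d\<^sup>2 + 1 / real (Suc n))"
      using d0 by (metis add_strict_left_mono add_0_right of_nat_0_less_iff real_sqrt_abs
          real_sqrt_less_mono zero_less_Suc zero_less_divide_1_iff abs_of_nonneg)
    then obtain y where y: "y \<in> M" "norm (x - y) < sqrt (d\<^sup>2 + 1 / real (Suc n))"
      using cInf_lessD[OF ne] unfolding d_def by auto
    have "0 \<le> d\<^sup>2 + 1 / real (Suc n)" by simp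
    moreover have "(norm (x - y))\<^sup>2 < (sqrt (d\<^sup>2 + 1 / real (Suc n)))\<^sup>2"
      using y(2) by (intro power_strict_mono) auto
    ultimately show ?thesis using y(1) by (metis real_sqrt_pow2)
  qed
  then obtain Y where Y: "\<And>n. Y n \<in> M" "\<And>n. (norm (x - Y n))\<^sup>2 < d\<^sup>2 + 1 / real (Suc n)"
    by metis
  have "Cauchy Y"
  proof (rule metric_CauchyI)
    fix e :: real assume e: "0 < e"
    obtain N :: nat where "4 / e\<^sup>2 < real N" using reals_Archimedean2 by blast
    then have N: "4 / e\<^sup>2 < real (Suc N)" by simp
    have "dist (Y k) (Y n) < e" if "N \<le> k" "N \<le> n" for k n
    proof -
      have "2 / real (Suc k) \<le> 2 / real (Suc N)" "2 / real (Suc n) \<le> 2 / real (Suc N)"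
        using that by (intro divide_left_mono; simp)+
      moreover have "4 / real (Suc N) < e\<^sup>2"
        using N e by (simp add: divide_less_eq mult.commute)
      moreover have "(norm (Y k - Y n))\<^sup>2 \<le> 2 * (norm (x - Y k))\<^sup>2 + 2 * (norm (x - Y n))\<^sup>2 - 4 * d\<^sup>2"
        by (rule midpoint_dist_bound[OF sub dle d0 Y(1) Y(1)])
      ultimately have "(dist (Y k) (Y n))\<^sup>2 < e\<^sup>2"
        using Y(2)[of k] Y(2)[of n] by (simp add: dist_norm)
      then show ?thesis using e by (simp add: power_less_imp_less_base)
    qed
    then show "\<exists>M. \<forall>k\<ge>M. \<forall>n\<ge>M. dist (Y k) (Y n) < e" by blast
  qed
  then obtain p where lim: "Y \<longlonglongrightarrow> p" using Cauchy_convergent_iff convergent_def by blast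
  have pM: "p \<in> M" using closed_sequentially[OF cl] Y(1) lim by blast
  have "(\<lambda>n. (norm (x - Y n))\<^sup>2) \<longlonglongrightarrow> (norm (x - p))\<^sup>2"
    by (intro tendsto_intros lim)
  moreover have "(\<lambda>n. d\<^sup>2 + 1 / real (Suc n)) \<longlonglongrightarrow> d\<^sup>2 + 0"
    by (intro tendsto_intros LIMSEQ_inverse_real_of_nat[unfolded inverse_eq_divide])
  ultimately have "(norm (x - p))\<^sup>2 \<le> d\<^sup>2 + 0"
    by (rule LIMSEQ_le) (use Y(2) less_imp_le in blast)
  then have "(norm (x - p))\<^sup>2 \<le> d\<^sup>2" by simp
  then have "norm (x - p) \<le> d" using d0 by (rule power2_le_imp_le)
  then have "norm (x - p) \<le> norm (x - y)" if "y \<in> M" for y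
    using dle[OF that] by linarith
  with pM that show ?thesis by blast
qed

lemma orthogonal_projection_exists:
  fixes M :: "'a::chilbert set"
  assumes "csubspace M" and "closed M"
  shows "\<exists>p\<in>M. \<forall>y\<in>M. cinner (x - p) y = 0"
  by (metis nearest_point_exists[OF assms] nearest_point_orthogonal[OF assms(1)])

lemma closed_kernel:
  assumes sub: "csubspace M" and cl: "closed M"
    and diff: "\<And>x y. x \<in> M \<Longrightarrow> y \<in> M \<Longrightarrow> \<phi> (x - y) = \<phi> x - \<phi> y"
    and bd: "\<And>x. x \<in> M \<Longrightarrow> norm (\<phi> x) \<le> K * norm x"
  shows "closed {v\<in>M. \<phi> v = 0}"
  unfolding closed_sequential_limits
proof (intro allI impI)
  fix X l assume h: "(\<forall>n. X n \<in> {v\<in>M. \<phi> v = 0}) \<and> X \<longlonglongrightarrow> l"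
  then have lM: "l \<in> M" using closed_sequentially[OF cl] by auto
  have "norm (\<phi> l) \<le> K * norm (l - X n)" for n
    using h diff[OF lM, of "X n"] bd[of "l - X n"] lM by (simp add: csubspace_diff[OF sub])
  moreover have "(\<lambda>n. K * norm (l - X n)) \<longlonglongrightarrow> K * norm (l - l)"
    using h by (intro tendsto_intros) auto
  ultimately have "norm (\<phi> l) \<le> 0"
    by (intro LIMSEQ_le[OF tendsto_const]) auto
  then show "l \<in> {v\<in>M. \<phi> v = 0}" using lM by simp
qed

lemma riesz_representation:
  fixes M :: "'a::chilbert set" and \<phi> :: "'a \<Rightarrow> complex"
  assumes sub: "csubspace M" and cl: "closed M"
    and add: "\<And>x y. x \<in> M \<Longrightarrow> y \<in> M \<Longrightarrow> \<phi> (x + y) = \<phi> x + \<phi> y"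
    and sc: "\<And>c x. x \<in> M \<Longrightarrow> \<phi> (c *\<^sub>C x) = c * \<phi> x"
    and bd: "\<And>x. x \<in> M \<Longrightarrow> norm (\<phi> x) \<le> K * norm x"
  shows "\<exists>g\<in>M. \<forall>v\<in>M. \<phi> v = cinner v g"
proof (cases "\<forall>v\<in>M. \<phi> v = 0")
  case True
  then show ?thesis using csubspace_0[OF sub] by (intro bexI[of _ 0]) auto
next
  case False
  then obtain x0 where x0: "x0 \<in> M" "\<phi> x0 \<noteq> 0" by blast
  have diff: "\<phi> (x - y) = \<phi> x - \<phi> y" if "x \<in> M" "y \<in> M" for x y
    using add[OF that(1) csubspace_scaleC[OF sub that(2)], of "-1"] sc[OF that(2), of "-1"]
    by (simp add: scaleC_minus1)
  define N where "N = {v\<in>M. \<phi> v = 0}"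
  have subN: "csubspace N" unfolding csubspace_def N_def
    using sub csubspace_0[OF sub] diff[of 0 0] add sc by (auto simp: csubspace_add csubspace_scaleC)
  have "closed N" unfolding N_def by (rule closed_kernel[OF sub cl]) (use diff bd in auto)
  then obtain p where p: "p \<in> N" "\<forall>y\<in>N. cinner (x0 - p) y = 0"
    using orthogonal_projection_exists[OF subN] by blast
  \<comment> \<open>\<open>z \<noteq> 0\<close> is orthogonal to the kernel, which has codimension one\<close>
  define z where "z = x0 - p"
  have pM: "p \<in> M" "\<phi> p = 0" using p by (auto simp: N_def)
  have zM: "z \<in> M" unfolding z_def using x0 pM sub by (simp add: csubspace_diff)
  have phiz: "\<phi> z \<noteq> 0" using diff[OF x0(1) pM(1)] pM x0 by (simp add: z_def)
  then have zz: "cinner z z \<noteq> 0" using diff[OF zM zM] by (auto simp: cinner_self_eq_zero)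
  define g where "g = cnj (\<phi> z / cinner z z) *\<^sub>C z"
  have "\<phi> v = cinner v g" if vM: "v \<in> M" for v
  proof -
    define w where "w = v - (\<phi> v / \<phi> z) *\<^sub>C z"
    have "w \<in> M" unfolding w_def using vM zM sub by (simp add: csubspace_diff csubspace_scaleC)
    moreover have "\<phi> w = 0" unfolding w_def
      using diff[OF vM csubspace_scaleC[OF sub zM]] sc[OF zM] phiz by simp
    ultimately have "cinner z w = 0" using p(2) z_def N_def by simp
    then have "cinner w z = 0" using cinner_commute[of w z] by simp
    then have "cinner v z = (\<phi> v / \<phi> z) * cinner z z"
      unfolding w_def by (simp add: cinner_diff_left cinner_scaleC_left)
    then show ?thesis using zz phiz by (simp add: g_def cinner_scaleC_right)
  qed
  moreover have "g \<in> M" using zM sub by (simp add: g_def csubspace_scaleC)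
  ultimately show ?thesis by blast
qed

lemma sesquilinear_representation:
  fixes M :: "'a::chilbert set" and \<beta> :: "'a \<Rightarrow> 'a \<Rightarrow> complex"
  assumes sub: "csubspace M" and cl: "closed M"
    and add2: "\<And>u v w. \<beta> u (v + w) = \<beta> u v + \<beta> u w"
    and sc2: "\<And>c u v. \<beta> u (c *\<^sub>C v) = cnj c * \<beta> u v"
    and bd: "\<And>u v. norm (\<beta> u v) \<le> C * norm u * norm v"
  obtains B where "\<And>u. B u \<in> M" "\<And>u v. v \<in> M \<Longrightarrow> \<beta> u v = cinner (B u) v"
proof -
  have "\<exists>b\<in>M. \<forall>v\<in>M. \<beta> u v = cinner b v" for u
  proof -
    obtain b where "b \<in> M" "\<forall>v\<in>M. cnj (\<beta> u v) = cinner v b"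
      using riesz_representation[OF sub cl, of "\<lambda>v. cnj (\<beta> u v)" "C * norm u"] add2 sc2 bd
      by auto
    then show ?thesis by (metis cinner_commute complex_cnj_cnj)
  qed
  then show ?thesis using that by metis
qed

lemma contraction_estimate:
  fixes d e :: "'a::complex_inner"
  assumes coer: "\<mu> * (norm d)\<^sup>2 \<le> Re (cinner d e)" and bd: "norm e \<le> C * norm d"
    and \<mu>: "0 < \<mu>" "\<mu> \<le> C"
  shows "norm (d - (\<mu> / C\<^sup>2) *\<^sub>R e) \<le> sqrt (1 - \<mu>\<^sup>2 / C\<^sup>2) * norm d"
proof -
  define \<rho> where "\<rho> = \<mu> / C\<^sup>2"
  have C0: "0 < C" using \<mu> by linarith
  have \<rho>0: "0 \<le> \<rho>" using \<mu> by (simp add: \<rho>_def)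
  have "(norm (d - \<rho> *\<^sub>R e))\<^sup>2 = (norm d)\<^sup>2 + \<rho>\<^sup>2 * (norm e)\<^sup>2 - 2 * \<rho> * Re (cinner d e)"
    by (simp add: norm_diff_sq cinner_scaleR_right power_mult_distrib)
  also have "\<dots> \<le> (norm d)\<^sup>2 + \<rho>\<^sup>2 * (C * norm d)\<^sup>2 - 2 * \<rho> * (\<mu> * (norm d)\<^sup>2)"
    using bd coer \<rho>0 by (intro diff_mono add_left_mono mult_left_mono power_mono) auto
  also have "\<dots> = (1 - \<mu>\<^sup>2 / C\<^sup>2) * (norm d)\<^sup>2"
    using C0 by (simp add: \<rho>_def field_simps power2_eq_square)
  also have "\<dots> = (sqrt (1 - \<mu>\<^sup>2 / C\<^sup>2) * norm d)\<^sup>2"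
    using \<mu> power_mono[of \<mu> C 2] by (simp add: power_mult_distrib)
  finally show ?thesis
    unfolding \<rho>_def by (rule power2_le_imp_le) (use \<mu> power_mono[of \<mu> C 2] in simp)
qed

lemma lax_milgram:
  fixes M :: "'a::chilbert set" and \<beta> :: "'a \<Rightarrow> 'a \<Rightarrow> complex" and \<psi> :: "'a \<Rightarrow> complex"
  assumes sub: "csubspace M" and cl: "closed M"
    and add1: "\<And>x y v. \<beta> (x + y) v = \<beta> x v + \<beta> y v"
    and sc1: "\<And>c x v. \<beta> (c *\<^sub>C x) v = c * \<beta> x v"
    and add2: "\<And>u v w. \<beta> u (v + w) = \<beta> u v + \<beta> u w"
    and sc2: "\<And>c u v. \<beta> u (c *\<^sub>C v) = cnj c * \<beta> u v"
    and bd: "\<And>u v. norm (\<beta> u v) \<le> C * norm u * norm v"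
    and coer: "\<And>u. u \<in> M \<Longrightarrow> \<mu> * (norm u)\<^sup>2 \<le> Re (\<beta> u u)" and \<mu>: "\<mu> > 0"
    and \<psi>_add: "\<And>v w. \<psi> (v + w) = \<psi> v + \<psi> w"
    and \<psi>_sc: "\<And>c v. \<psi> (c *\<^sub>C v) = cnj c * \<psi> v"
    and \<psi>_bd: "\<And>v. norm (\<psi> v) \<le> K * norm v"
  shows "\<exists>w\<in>M. \<forall>v\<in>M. \<beta> w v = \<psi> v"
proof -
  obtain g where g0: "g \<in> M" "\<forall>v\<in>M. cnj (\<psi> v) = cinner v g"
    using riesz_representation[OF sub cl, of "\<lambda>v. cnj (\<psi> v)" K] \<psi>_add \<psi>_sc \<psi>_bd by auto
  then have g: "g \<in> M" "\<And>v. v \<in> M \<Longrightarrow> \<psi> v = cinner g v"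
    by (metis cinner_commute complex_cnj_cnj)+
  obtain B where B: "\<And>u. B u \<in> M" "\<And>u v. v \<in> M \<Longrightarrow> \<beta> u v = cinner (B u) v"
    using sesquilinear_representation[OF sub cl add2 sc2 bd] by metis
  define C' where "C' = max C \<mu>"
  have C': "0 < C'" "C \<le> C'" "\<mu> \<le> C'" using \<mu> by (auto simp: C'_def)
  \<comment> \<open>a solution is a fixed point of \<open>u \<mapsto> u - \<rho> (B u - g)\<close>, a contraction for small \<open>\<rho> > 0\<close>\<close>
  define T where "T u = u - (\<mu> / C'\<^sup>2) *\<^sub>R (B u - g)" for u
  define q where "q = sqrt (1 - \<mu>\<^sup>2 / C'\<^sup>2)"
  have "\<mu>\<^sup>2 \<le> C'\<^sup>2" using C' \<mu> by (simp add: power_mono)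
  then have q: "0 \<le> q" "q < 1" using C' \<mu> by (simp_all add: q_def real_sqrt_lt_1_iff)
  have TM: "T ` M \<subseteq> M" using B(1) g(1) sub by (auto simp: T_def csubspace_diff csubspace_scaleR)
  have "dist (T u) (T u') \<le> q * dist u u'" if "u \<in> M" "u' \<in> M" for u u'
  proof -
    define d e where "d = u - u'" and "e = B u - B u'"
    have dM: "d \<in> M" "e \<in> M" using that B(1) sub by (auto simp: d_def e_def csubspace_diff)
    have \<beta>d: "\<beta> d v = cinner e v" if "v \<in> M" for v
      using add1[of "u - u'" u' v] that by (simp add: d_def e_def B(2) cinner_diff_left)
    have "\<mu> * (norm d)\<^sup>2 \<le> Re (cinner d e)"
      using coer[OF dM(1)] \<beta>d[OF dM(1)] by (simp add: Re_cinner_commute)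
    moreover have "norm e \<le> C' * norm d"
    proof -
      have "norm e * norm e = Re (\<beta> d e)" using \<beta>d[OF dM(2)] by (simp add: norm_sq_cinner[symmetric] power2_eq_square)
      also have "\<dots> \<le> C * norm d * norm e" using complex_Re_le_cmod[of "\<beta> d e"] bd[of d e] by linarith
      also have "\<dots> \<le> (C' * norm d) * norm e" using C' by (simp add: mult_right_mono)
      finally show ?thesis using C' by (cases "e = 0") (auto dest: mult_right_le_imp_le)
    qed
    ultimately have "norm (d - (\<mu> / C'\<^sup>2) *\<^sub>R e) \<le> q * norm d"
      unfolding q_def by (rule contraction_estimate[OF _ _ \<mu> C'(3)])
    moreover have "T u - T u' = d - (\<mu> / C'\<^sup>2) *\<^sub>R e"
      by (simp add: T_def d_def e_def algebra_simps)
    ultimately show ?thesis by (simp add: dist_norm d_def)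
  qed
  then have "\<forall>u\<in>M. \<forall>u'\<in>M. dist (T u) (T u') \<le> q * dist u u'" by blast
  moreover have "complete M" "M \<noteq> {}" using cl csubspace_0[OF sub] complete_eq_closed by auto
  ultimately obtain w where w: "w \<in> M" "T w = w" using Banach_fix[of M q T] q TM by blast
  then have "B w = g" using \<mu> C' by (simp add: T_def)
  then show ?thesis using w(1) B(2) g(2) by auto
qed

section \<open>Adjoints and graph inner products\<close>

lemma adj_eq:
  assumes dd: "densely_defined S T" and yz: "\<forall>x\<in>S. cinner (T x) y = cinner x z"
  shows "y \<in> adj_dom S T" "adj S T y = z"
proof -
  show "y \<in> adj_dom S T" using yz by (auto simp: adj_dom_def)
  show "adj S T y = z" unfolding adj_def
  proof (rule the_equality)
    fix z' assume "\<forall>x\<in>S. cinner (T x) y = cinner x z'"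
    then have "cinner x (z' - z) = 0" if "x \<in> S" for x
      using yz that by (simp add: cinner_diff_right)
    moreover have "closure S = UNIV" using dd by (simp add: densely_defined_def)
    ultimately show "z' = z" using orthogonal_dense_eq_0[of S "z' - z"] by simp
  qed (rule yz)
qed

lemma cinner_adj:
  assumes "densely_defined S T" "y \<in> adj_dom S T" "x \<in> S"
  shows "cinner (T x) y = cinner x (adj S T y)"
proof -
  obtain z where z: "\<forall>x\<in>S. cinner (T x) y = cinner x z" using assms(2) by (auto simp: adj_dom_def)
  then show ?thesis using adj_eq(2)[OF assms(1) z] assms(3) by simp
qed

lemma csubspace_adj_dom: "csubspace (adj_dom S T)"
  unfolding csubspace_def
proof (intro conjI ballI allI)
  show "0 \<in> adj_dom S T" by (auto simp: adj_dom_def intro: exI[of _ 0])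
next
  fix y1 y2 assume "y1 \<in> adj_dom S T" "y2 \<in> adj_dom S T"
  then obtain z1 z2 where "\<forall>x\<in>S. cinner (T x) y1 = cinner x z1" "\<forall>x\<in>S. cinner (T x) y2 = cinner x z2"
    by (auto simp: adj_dom_def)
  then show "y1 + y2 \<in> adj_dom S T"
    by (auto simp: adj_dom_def cinner_add_right intro!: exI[of _ "z1 + z2"])
next
  fix c y1 assume "y1 \<in> adj_dom S T"
  then obtain z1 where "\<forall>x\<in>S. cinner (T x) y1 = cinner x z1" by (auto simp: adj_dom_def)
  then show "c *\<^sub>C y1 \<in> adj_dom S T"
    by (auto simp: adj_dom_def cinner_scaleC_right intro!: exI[of _ "c *\<^sub>C z1"])
qed

lemma lin_op_csubspace: "lin_op S T \<Longrightarrow> csubspace S"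
  by (simp add: lin_op_def)

lemma lin_op_add: "lin_op S T \<Longrightarrow> x \<in> S \<Longrightarrow> y \<in> S \<Longrightarrow> T (x + y) = T x + T y"
  by (simp add: lin_op_def clinear_on_def)

lemma lin_op_scaleC: "lin_op S T \<Longrightarrow> x \<in> S \<Longrightarrow> T (c *\<^sub>C x) = c *\<^sub>C T x"
  by (simp add: lin_op_def clinear_on_def)

lemma lin_op_diff:
  assumes "lin_op S T" "x \<in> S" "y \<in> S"
  shows "T (x - y) = T x - T y"
proof -
  have "T (x + (-1) *\<^sub>C y) = T x + (-1) *\<^sub>C T y"
    using assms by (simp add: lin_op_add lin_op_scaleC csubspace_scaleC lin_op_csubspace)
  then show ?thesis by (simp add: scaleC_minus1)
qed

lemma lin_op_zero: "lin_op S T \<Longrightarrow> T 0 = 0"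
  using lin_op_diff[of S T 0 0] csubspace_0 lin_op_csubspace by fastforce

lemma lin_op_UNIV: "cbounded_linear f \<Longrightarrow> lin_op UNIV f"
  by (simp add: cbounded_linear_def lin_op_def csubspace_def)

lemma graph_inner_pair: "graph_inner T x y = cinner (x, T x) (y, T y)"
  by (simp add: graph_inner_def cinner_Pair)

lemma graph_norm_pair: "graph_norm T x = norm (x, T x)"
  by (simp add: graph_norm_def graph_inner_pair norm_eq_sqrt_cinner)

lemma graph_inner_commute: "graph_inner T x y = cnj (graph_inner T y x)"
  by (simp add: graph_inner_pair cinner_commute[of "(x, T x)"])

lemma graph_inner_self_eq_zero: "graph_inner T x x = 0 \<Longrightarrow> x = 0"
  by (simp add: graph_inner_pair cinner_self_eq_zero zero_prod_def)

lemma graph_inner_add_left: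
  "lin_op S T \<Longrightarrow> x \<in> S \<Longrightarrow> y \<in> S \<Longrightarrow> graph_inner T (x + y) v = graph_inner T x v + graph_inner T y v"
  by (simp add: graph_inner_def lin_op_add cinner_add_left)

lemma graph_inner_diff_left:
  "lin_op S T \<Longrightarrow> x \<in> S \<Longrightarrow> y \<in> S \<Longrightarrow> graph_inner T (x - y) v = graph_inner T x v - graph_inner T y v"
  by (simp add: graph_inner_def lin_op_diff cinner_diff_left)

lemma graph_inner_scaleC_left:
  "lin_op S T \<Longrightarrow> x \<in> S \<Longrightarrow> graph_inner T (c *\<^sub>C x) v = c * graph_inner T x v"
  by (simp add: graph_inner_def lin_op_scaleC cinner_scaleC_left distrib_left)

lemma csubspace_graph:
  assumes "lin_op S T" "csubspace E" "E \<subseteq> S"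
  shows "csubspace {(x, T x) | x. x \<in> E}"
  unfolding csubspace_def
proof (intro conjI ballI allI)
  show "0 \<in> {(x, T x) | x. x \<in> E}"
    using lin_op_zero[OF assms(1)] csubspace_0[OF assms(2)] by (auto simp: zero_prod_def)
next
  fix P Q assume "P \<in> {(x, T x) | x. x \<in> E}" "Q \<in> {(x, T x) | x. x \<in> E}"
  then obtain x y where xy: "P = (x, T x)" "Q = (y, T y)" "x \<in> E" "y \<in> E" by blast
  then have "x \<in> S" "y \<in> S" using assms(3) by auto
  then show "P + Q \<in> {(x, T x) | x. x \<in> E}"
    using xy lin_op_add[OF assms(1)] csubspace_add[OF assms(2) xy(3,4)] by auto
next
  fix c P assume "P \<in> {(x, T x) | x. x \<in> E}"
  then obtain x where x: "P = (x, T x)" "x \<in> E" by blast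
  then have "x \<in> S" using assms(3) by auto
  then show "c *\<^sub>C P \<in> {(x, T x) | x. x \<in> E}"
    using x lin_op_scaleC[OF assms(1)] csubspace_scaleC[OF assms(2) x(2)]
    by (auto simp: scaleC_prod_def)
qed

text \<open>\<open>T\<^sup>*\<^sup>* \<subseteq> T\<close> for closed densely defined \<open>T\<close>.\<close>

lemma closed_op_adj_adj:
  fixes S :: "'a::chilbert set" and T :: "'a \<Rightarrow> 'b::chilbert"
  assumes dd: "densely_defined S T" and cl: "closed_op S T"
    and h: "\<forall>y\<in>adj_dom S T. cinner (adj S T y) x = cinner y w"
  shows "x \<in> S \<and> T x = w"
proof -
  have lin: "lin_op S T" using dd by (simp add: densely_defined_def)
  define \<Gamma> where "\<Gamma> = {(x, T x) | x. x \<in> S}"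
  have sub: "csubspace \<Gamma>"
    unfolding \<Gamma>_def using csubspace_graph[OF lin lin_op_csubspace[OF lin]] by simp
  have "closed \<Gamma>" using cl by (simp add: closed_op_def \<Gamma>_def)
  then obtain P where P: "P \<in> \<Gamma>" "\<forall>Y\<in>\<Gamma>. cinner ((x, w) - P) Y = 0"
    using orthogonal_projection_exists[OF sub] by blast
  then obtain p where p: "p \<in> S" "P = (p, T p)" by (auto simp: \<Gamma>_def)
  define q r where "q = x - p" and "r = w - T p"
  \<comment> \<open>\<open>(q, r) \<perp> graph(T)\<close> says precisely \<open>r \<in> dom(T\<^sup>*)\<close> with \<open>T\<^sup>* r = -q\<close>\<close>
  have orth: "cinner q x' + cinner r (T x') = 0" if "x' \<in> S" for x'
    using P(2) that p by (auto simp: \<Gamma>_def q_def r_def cinner_Pair)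
  have "cinner (T x') r = cinner x' (- q)" if "x' \<in> S" for x'
  proof -
    have "cinner r (T x') = - cinner q x'"
      using orth[OF that] by (simp add: eq_neg_iff_add_eq_0 add.commute)
    then have "cnj (cinner r (T x')) = - cnj (cinner q x')" by simp
    then show ?thesis by (metis cinner_commute cinner_minus_right)
  qed
  then have ra: "r \<in> adj_dom S T" "adj S T r = - q" using adj_eq[OF dd] by blast+
  have "cinner (adj S T r) x = cinner r w" using h ra(1) by blast
  then have "- cinner q x = cinner r w" using ra(2) by (simp add: cinner_minus_left)
  then have "cinner q x + cinner r w = 0" by (simp add: add_eq_0_iff)
  moreover have "cinner q q + cinner r r = (cinner q x + cinner r w) - (cinner q p + cinner r (T p))"
    by (simp add: q_def r_def cinner_diff_right)
  ultimately have "cinner q q + cinner r r = 0"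
    using orth[OF p(1)] by simp
  then have "Re (cinner q q) + Re (cinner r r) = 0"
    by (metis plus_complex.sel(1) zero_complex.sel(1))
  then have "q = 0" "r = 0"
    using cinner_self_nonneg[of q] cinner_self_nonneg[of r]
    by (simp_all add: cinner_self_norm)
  then show ?thesis using p by (simp add: q_def r_def)
qed

lemma closed_graph_adj_dom:
  assumes dd: "densely_defined S' T'" and hT: "\<forall>x\<in>adj_dom S' T'. T x = - adj S' T' x"
  shows "closed {(x, T x) | x. x \<in> adj_dom S' T'}"
proof -
  have "{(x, T x) | x. x \<in> adj_dom S' T'} = (\<Inter>s\<in>S'. {P. cinner (T' s) (fst P) = cinner s (- snd P)})"
  proof (intro equalityI subsetI)
    fix P assume "P \<in> {(x, T x) | x. x \<in> adj_dom S' T'}"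
    then show "P \<in> (\<Inter>s\<in>S'. {P. cinner (T' s) (fst P) = cinner s (- snd P)})"
      using cinner_adj[OF dd] hT by auto
  next
    fix P assume "P \<in> (\<Inter>s\<in>S'. {P. cinner (T' s) (fst P) = cinner s (- snd P)})"
    then have "fst P \<in> adj_dom S' T'" "adj S' T' (fst P) = - snd P"
      using adj_eq[OF dd] by blast+
    then show "P \<in> {(x, T x) | x. x \<in> adj_dom S' T'}"
      using hT by (intro CollectI exI[of _ "fst P"]) auto
  qed
  moreover have "closed {P. cinner (T' s) (fst P) = cinner s (- snd P)}" for s
    by (intro closed_Collect_eq continuous_on_cinner continuous_on_const continuous_on_fst
        continuous_on_snd continuous_on_minus continuous_on_id)
  ultimately show ?thesis by (simp add: closed_INT)
qed

definition graph_complement :: "'a::complex_inner set \<Rightarrow> ('a \<Rightarrow> 'b::complex_inner) \<Rightarrow> 'a set \<Rightarrow> 'a set" where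
  "graph_complement S T E = {v\<in>S. \<forall>e\<in>E. graph_inner T v e = 0}"

lemma csubspace_graph_complement:
  assumes lin: "lin_op S T"
  shows "csubspace (graph_complement S T E)"
  unfolding csubspace_def graph_complement_def
proof (intro conjI ballI allI)
  have "T 0 = 0" using lin by (rule lin_op_zero)
  then show "0 \<in> {v\<in>S. \<forall>e\<in>E. graph_inner T v e = 0}"
    using csubspace_0[OF lin_op_csubspace[OF lin]] by (simp add: graph_inner_def)
next
  fix x y assume "x \<in> {v\<in>S. \<forall>e\<in>E. graph_inner T v e = 0}" "y \<in> {v\<in>S. \<forall>e\<in>E. graph_inner T v e = 0}"
  then show "x + y \<in> {v\<in>S. \<forall>e\<in>E. graph_inner T v e = 0}"
    using lin by (simp add: graph_inner_add_left csubspace_add lin_op_csubspace)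
next
  fix c x assume "x \<in> {v\<in>S. \<forall>e\<in>E. graph_inner T v e = 0}"
  then show "c *\<^sub>C x \<in> {v\<in>S. \<forall>e\<in>E. graph_inner T v e = 0}"
    using lin by (simp add: graph_inner_scaleC_left csubspace_scaleC lin_op_csubspace)
qed

lemma orth_proj_unique:
  assumes lin: "lin_op S T" and uS: "u \<in> S" and pB: "p \<in> graph_complement S T E" and uE: "u - p \<in> E"
  shows "orth_proj T (graph_complement S T E) u = p"
proof -
  let ?B = "graph_complement S T E"
  have orth: "graph_inner T (u - q) w = 0" if "w \<in> ?B" "u - q \<in> E" for q w
  proof -
    have "graph_inner T w (u - q) = 0" using that by (simp add: graph_complement_def)
    then show ?thesis using graph_inner_commute[of T "u - q" w] by simp
  qed
  have "p' = p" if p': "p' \<in> ?B" "\<forall>w\<in>?B. graph_inner T (u - p') w = 0" for p'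
  proof -
    have pS: "p \<in> S" "p' \<in> S" using pB p'(1) by (simp_all add: graph_complement_def)
    have dB: "p - p' \<in> ?B"
      using csubspace_diff[OF csubspace_graph_complement[OF lin] pB p'(1)] .
    have "(u - p') - (u - p) = p - p'" by (simp add: algebra_simps)
    then have "graph_inner T (p - p') (p - p')
        = graph_inner T (u - p') (p - p') - graph_inner T (u - p) (p - p')"
      using graph_inner_diff_left[OF lin, of "u - p'" "u - p" "p - p'"] uS pS
        lin_op_csubspace[OF lin] by (simp add: csubspace_diff)
    also have "\<dots> = 0" using p'(2) dB orth[OF dB uE] by simp
    finally have "p - p' = 0" by (rule graph_inner_self_eq_zero)
    then show ?thesis by simp
  qed
  moreover have "p \<in> ?B \<and> (\<forall>w\<in>?B. graph_inner T (u - p) w = 0)" using pB orth uE by blast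
  ultimately show ?thesis unfolding orth_proj_def by (intro the_equality) blast+
qed

lemma orth_proj_graph_complement:
  fixes S :: "'a::chilbert set" and T :: "'a \<Rightarrow> 'b::chilbert"
  assumes lin: "lin_op S T" and ES: "E \<subseteq> S" and subE: "csubspace E"
    and clE: "closed {(x, T x) | x. x \<in> E}" and uS: "u \<in> S"
  shows "orth_proj T (graph_complement S T E) u \<in> graph_complement S T E
    \<and> u - orth_proj T (graph_complement S T E) u \<in> E"
proof -
  obtain P where P: "P \<in> {(x, T x) | x. x \<in> E}" "\<forall>Y\<in>{(x, T x) | x. x \<in> E}. cinner ((u, T u) - P) Y = 0"
    using orthogonal_projection_exists[OF csubspace_graph[OF lin subE ES] clE] by blast
  then obtain e where e: "e \<in> E" "P = (e, T e)" by blast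
  have eS: "e \<in> S" using e ES by auto
  have "u - e \<in> graph_complement S T E"
    using P(2) e(2) uS eS lin_op_csubspace[OF lin]
    by (auto simp: graph_complement_def graph_inner_pair lin_op_diff[OF lin] csubspace_diff)
  moreover have "orth_proj T (graph_complement S T E) u = u - e"
    using orth_proj_unique[OF lin uS calculation] e(1) by simp
  ultimately show ?thesis using e(1) by simp
qed

section \<open>Boundary data spaces\<close>

locale boundary_pair =
  fixes domG :: "'h0::chilbert set" and G :: "'h0 \<Rightarrow> 'h1::chilbert"
    and domD :: "'h1 set" and D :: "'h1 \<Rightarrow> 'h0"
  assumes G_dd: "densely_defined domG G" and G_closed: "closed_op domG G"
    and D_dd: "densely_defined domD D" and D_closed: "closed_op domD D"
    and GD: "\<forall>y \<in> adj_dom domG G. y \<in> domD \<and> D y = - adj domG G y"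
begin

text \<open>\<open>dom(G\<^sub>0) = dom(D\<^sup>*)\<close> and \<open>dom(D\<^sub>0) = dom(G\<^sup>*)\<close>, where \<open>G\<^sub>0 = -D\<^sup>*\<close>, \<open>D\<^sub>0 = -G\<^sup>*\<close>.\<close>

abbreviation "domG0 \<equiv> adj_dom domD D"
abbreviation "domD0 \<equiv> adj_dom domG G"
abbreviation "BG \<equiv> BD_G domG G domD D"
abbreviation "BD \<equiv> BD_D domG G domD D"

lemma lin_op_G: "lin_op domG G"
  using G_dd by (simp add: densely_defined_def)

lemma lin_op_D: "lin_op domD D"
  using D_dd by (simp add: densely_defined_def)

lemma BD_G_eq: "BG = graph_complement domG G domG0"
  by (simp add: BD_G_def graph_complement_def)

lemma BD_D_eq: "BD = graph_complement domD D domD0"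
  by (simp add: BD_D_def graph_complement_def)

lemma csubspace_BD_G: "csubspace BG"
  unfolding BD_G_eq using lin_op_G by (rule csubspace_graph_complement)

lemma csubspace_BD_D: "csubspace BD"
  unfolding BD_D_eq using lin_op_D by (rule csubspace_graph_complement)

lemma BD_G_subset: "BG \<subseteq> domG"
  by (auto simp: BD_G_def)

lemma BD_D_subset: "BD \<subseteq> domD"
  by (auto simp: BD_D_def)

lemma domD0_D: "y \<in> domD0 \<Longrightarrow> y \<in> domD \<and> D y = - adj domG G y"
  using GD by blast

lemma domG0_G:
  assumes x: "x \<in> domG0"
  shows "x \<in> domG \<and> G x = - adj domD D x"
proof -
  have "cinner (adj domG G y) x = cinner y (- adj domD D x)" if y: "y \<in> domD0" for y
  proof -
    have "cinner (D y) x = cinner y (adj domD D x)"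
      using cinner_adj[OF D_dd x] domD0_D[OF y] by blast
    then have "- cinner (adj domG G y) x = cinner y (adj domD D x)"
      using domD0_D[OF y] by (simp add: cinner_minus_left)
    then show ?thesis by (simp add: cinner_minus_right) (metis minus_minus)
  qed
  then show ?thesis using closed_op_adj_adj[OF G_dd G_closed] by blast
qed

lemma domG0_subset: "domG0 \<subseteq> domG"
  using domG0_G by blast

lemma closed_graph_domG0: "closed {(x, G x) | x. x \<in> domG0}"
  using domG0_G by (intro closed_graph_adj_dom[OF D_dd]) simp

lemma closed_graph_domD0: "closed {(y, D y) | y. y \<in> domD0}"
  using domD0_D by (intro closed_graph_adj_dom[OF G_dd]) simp

lemma domD0_subset: "domD0 \<subseteq> domD"
  using domD0_D by blast

lemma orth_proj_BD_G:
  "u \<in> domG \<Longrightarrow> orth_proj G BG u \<in> BG \<and> u - orth_proj G BG u \<in> domG0"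
  unfolding BD_G_eq
  by (rule orth_proj_graph_complement[OF lin_op_G domG0_subset csubspace_adj_dom closed_graph_domG0])

lemma orth_proj_BD_D:
  "w \<in> domD \<Longrightarrow> orth_proj D BD w \<in> BD \<and> w - orth_proj D BD w \<in> domD0"
  unfolding BD_D_eq
  by (rule orth_proj_graph_complement[OF lin_op_D domD0_subset csubspace_adj_dom closed_graph_domD0])

lemma orth_proj_BD_G_unique: "u \<in> domG \<Longrightarrow> p \<in> BG \<Longrightarrow> u - p \<in> domG0 \<Longrightarrow> orth_proj G BG u = p"
  unfolding BD_G_eq using lin_op_G by (rule orth_proj_unique)

lemma G_BD_G:
  assumes v: "v \<in> BG"
  shows "G v \<in> BD \<and> D (G v) = v"
proof -
  have vG: "v \<in> domG" using v BD_G_subset by blast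
  have "cinner (adj domD D y) (G v) = cinner y v" if y: "y \<in> domG0" for y
  proof -
    have "graph_inner G v y = 0" using v y by (simp add: BD_G_def)
    then have "cinner v y = cinner (G v) (adj domD D y)"
      using domG0_G[OF y] by (simp add: graph_inner_def cinner_minus_right add_eq_0_iff)
    then show ?thesis by (metis cinner_commute)
  qed
  then have DG: "G v \<in> domD" "D (G v) = v" using closed_op_adj_adj[OF D_dd D_closed] by blast+
  have "graph_inner D (G v) y = 0" if y: "y \<in> domD0" for y
    using cinner_adj[OF G_dd y vG] domD0_D[OF y] DG
    by (simp add: graph_inner_def cinner_minus_right)
  then show ?thesis using DG by (simp add: BD_D_def)
qed

lemma D_BD_D:
  assumes z: "z \<in> BD"
  shows "D z \<in> BG \<and> G (D z) = z"
proof -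
  have zD: "z \<in> domD" using z BD_D_subset by blast
  have "cinner (adj domG G y) (D z) = cinner y z" if y: "y \<in> domD0" for y
  proof -
    have "graph_inner D z y = 0" using z y by (simp add: BD_D_def)
    then have "cinner z y = cinner (D z) (adj domG G y)"
      using domD0_D[OF y] by (simp add: graph_inner_def cinner_minus_right add_eq_0_iff)
    then show ?thesis by (metis cinner_commute)
  qed
  then have GD': "D z \<in> domG" "G (D z) = z" using closed_op_adj_adj[OF G_dd G_closed] by blast+
  have "graph_inner G (D z) x = 0" if x: "x \<in> domG0" for x
    using cinner_adj[OF D_dd x zD] domG0_G[OF x] GD'
    by (simp add: graph_inner_def cinner_minus_right)
  then show ?thesis using GD' by (simp add: BD_G_def)
qed

lemma orth_proj_BD_G_BD_G: "v \<in> BG \<Longrightarrow> orth_proj G BG v = v"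
  using orth_proj_BD_G_unique[of v v] BD_G_subset csubspace_0[OF csubspace_adj_dom] by auto

lemma orth_proj_BD_G_domG0: "v \<in> domG0 \<Longrightarrow> orth_proj G BG v = 0"
  using orth_proj_BD_G_unique[of v 0] domG0_subset csubspace_0[OF csubspace_BD_G] by auto

lemma graph_inner_G_BD_G:
  "k \<in> BG \<Longrightarrow> v \<in> BG \<Longrightarrow> graph_inner D (G k) (G v) = graph_inner G k v"
  using G_BD_G by (simp add: graph_inner_def add.commute)

lemma BD_D_eqI:
  assumes "z \<in> BD" "z' \<in> BD" and eq: "\<And>v. v \<in> BG \<Longrightarrow> graph_inner D z (G v) = graph_inner D z' (G v)"
  shows "z = z'"
proof -
  have zz: "z - z' \<in> BD" using csubspace_diff[OF csubspace_BD_D assms(1,2)] .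
  then have "graph_inner D (z - z') (G (D (z - z'))) = 0"
    using eq[of "D (z - z')"] D_BD_D[OF zz] assms(1,2) BD_D_subset
    by (simp add: graph_inner_diff_left[OF lin_op_D] subset_iff)
  then show ?thesis using D_BD_D[OF zz] graph_inner_self_eq_zero by fastforce
qed

lemma green_BD_G:
  assumes w: "w \<in> domD" and v: "v \<in> BG"
  shows "cinner w (G v) + cinner (D w) v = graph_inner D (orth_proj D BD w) (G v)"
proof -
  define w' where "w' = orth_proj D BD w"
  have w': "w' \<in> BD" "w - w' \<in> domD0" using orth_proj_BD_D[OF w] by (simp_all add: w'_def)
  have "graph_inner D (w - w') (G v) = 0"
    using w'(2) G_BD_G[OF v] graph_inner_commute[of D "w - w'" "G v"] by (simp add: BD_D_def)
  moreover have "cinner w (G v) + cinner (D w) v = graph_inner D w (G v)"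
    using G_BD_G[OF v] by (simp add: graph_inner_def)
  ultimately show ?thesis
    using graph_inner_diff_left[OF lin_op_D w, of w' "G v"] w'(1) BD_D_subset by (auto simp: w'_def)
qed

lemma kappa_adj_is_adjoint:
  fixes \<kappa> :: "'h0 \<Rightarrow> 'h::complex_inner"
  assumes \<kappa>_lin: "clinear_on BG \<kappa>" and \<kappa>_bdd: "\<forall>u \<in> BG. norm (\<kappa> u) \<le> K * graph_norm G u"
  shows "kappa_adj domG G domD D \<kappa> \<psi> \<in> BG
    \<and> (\<forall>u\<in>BG. cinner (\<kappa> u) \<psi> = graph_inner G u (kappa_adj domG G domD D \<kappa> \<psi>))"
proof -
  define \<Gamma> where "\<Gamma> = {(x, G x) | x. x \<in> BG}"
  have sub\<Gamma>: "csubspace \<Gamma>"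
    unfolding \<Gamma>_def using lin_op_G csubspace_BD_G BD_G_subset by (rule csubspace_graph)
  have "\<Gamma> = {(x, G x) | x. x \<in> domG} \<inter> (\<Inter>e\<in>domG0. {P. cinner P (e, G e) = 0})"
    by (auto simp: \<Gamma>_def BD_G_def graph_inner_pair)
  then have cl\<Gamma>: "closed \<Gamma>" using G_closed
    by (simp add: closed_Int closed_INT closed_cinner_eq closed_op_def)
  \<comment> \<open>Riesz representation in \<open>BD(G)\<close>, viewed as the graph \<open>\<Gamma>\<close> of \<open>G\<close> restricted to it\<close>
  define \<phi> where "\<phi> P = cinner (\<kappa> (fst P)) \<psi>" for P :: "'h0 \<times> 'h1"
  have fst\<Gamma>: "fst P \<in> BG" if "P \<in> \<Gamma>" for P using that by (auto simp: \<Gamma>_def)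
  obtain g where g: "g \<in> \<Gamma>" "\<forall>P\<in>\<Gamma>. \<phi> P = cinner P g"
  proof (rule riesz_representation[OF sub\<Gamma> cl\<Gamma>, of \<phi> "K * norm \<psi>", THEN bexE])
    fix P Q assume "P \<in> \<Gamma>" "Q \<in> \<Gamma>"
    then show "\<phi> (P + Q) = \<phi> P + \<phi> Q"
      using \<kappa>_lin fst\<Gamma> by (simp add: \<phi>_def clinear_on_def cinner_add_left)
  next
    fix c P assume "P \<in> \<Gamma>"
    then show "\<phi> (c *\<^sub>C P) = c * \<phi> P"
      using \<kappa>_lin fst\<Gamma> by (simp add: \<phi>_def clinear_on_def scaleC_prod_def cinner_scaleC_left)
  next
    fix P assume "P \<in> \<Gamma>"
    then obtain x where x: "P = (x, G x)" "x \<in> BG" by (auto simp: \<Gamma>_def)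
    have "norm (\<phi> P) \<le> norm (\<kappa> x) * norm \<psi>" using cauchy_schwarz by (simp add: \<phi>_def x)
    also have "\<dots> \<le> (K * graph_norm G x) * norm \<psi>" using \<kappa>_bdd x(2) by (simp add: mult_right_mono)
    finally show "norm (\<phi> P) \<le> K * norm \<psi> * norm P" by (simp add: graph_norm_pair x mult_ac)
  qed (use that in blast)
  then obtain k where k: "g = (k, G k)" "k \<in> BG" by (auto simp: \<Gamma>_def)
  have kprop: "\<forall>u\<in>BG. cinner (\<kappa> u) \<psi> = graph_inner G u k"
    using g(2) k(1) by (auto simp: \<Gamma>_def \<phi>_def graph_inner_pair)
  have "k' = k" if k': "k' \<in> BG" "\<forall>u\<in>BG. cinner (\<kappa> u) \<psi> = graph_inner G u k'" for k'
  proof -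
    have dB: "k' - k \<in> BG" using csubspace_diff[OF csubspace_BD_G k'(1) k(2)] .
    have "graph_inner G (k' - k) u = 0" if "u \<in> BG" for u
    proof -
      have "graph_inner G u k' = graph_inner G u k" using \<open>u \<in> BG\<close> kprop k'(2) by simp
      then have "graph_inner G k' u = graph_inner G k u"
        using graph_inner_commute[of G k' u] graph_inner_commute[of G k u] by simp
      then show ?thesis
        using graph_inner_diff_left[OF lin_op_G, of k' k u] \<open>k' \<in> BG\<close> k(2) BD_G_subset by auto
    qed
    then have "graph_inner G (k' - k) (k' - k) = 0" using dB by blast
    then show "k' = k" using graph_inner_self_eq_zero by fastforce
  qed
  then have "kappa_adj domG G domD D \<kappa> \<psi> = k"
    unfolding kappa_adj_def using k(2) kprop by (intro the_equality) blast+
  then show ?thesis using k(2) kprop by simp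
qed

lemma graph_inner_G_kappa_adj:
  assumes "clinear_on BG \<kappa>" "\<forall>u \<in> BG. norm (\<kappa> u) \<le> K * graph_norm G u" and v: "v \<in> BG"
  shows "graph_inner D (G (kappa_adj domG G domD D \<kappa> f)) (G v) = cinner f (\<kappa> v)"
proof -
  define k where "k = kappa_adj domG G domD D \<kappa> f"
  have "k \<in> BG" "cinner (\<kappa> v) f = graph_inner G v k"
    using kappa_adj_is_adjoint[OF assms(1,2), of f] v by (simp_all add: k_def)
  then show ?thesis
    using graph_inner_G_BD_G[of k v] v graph_inner_commute[of G k v] cinner_commute[of f "\<kappa> v"]
    by (simp add: k_def)
qed

end

section \<open>The Dirichlet-to-Neumann operator\<close>

locale dtn_problem = boundary_pair domG G domD D
  for domG :: "'h0::chilbert set" and G :: "'h0 \<Rightarrow> 'h1::chilbert"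
    and domD :: "'h1 set" and D :: "'h1 \<Rightarrow> 'h0" +
  fixes a :: "'h1 \<Rightarrow> 'h1" and m :: "'h0 \<Rightarrow> 'h0"
  assumes a_bdd: "cbounded_linear a" and a_coer: "coercive_op a"
    and m_bdd: "cbounded_linear m" and m_coer: "coercive_op m"
begin

definition pair_form :: "'h0 \<times> 'h1 \<Rightarrow> 'h0 \<times> 'h1 \<Rightarrow> complex" where
  "pair_form P Q = cinner (a (snd P)) (snd Q) + cinner (m (fst P)) (fst Q)"

definition dtn_form :: "'h0 \<Rightarrow> 'h0 \<Rightarrow> complex" where
  "dtn_form u v = cinner (a (G u)) (G v) + cinner (m u) v"

lemma dtn_form_pair_form: "dtn_form u v = pair_form (u, G u) (v, G v)"
  by (simp add: dtn_form_def pair_form_def)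

lemma pair_form_add_left: "pair_form (P + P') Q = pair_form P Q + pair_form P' Q"
  using lin_op_add[OF lin_op_UNIV[OF a_bdd]] lin_op_add[OF lin_op_UNIV[OF m_bdd]]
  by (simp add: pair_form_def cinner_add_left)

lemma pair_form_scaleC_left: "pair_form (c *\<^sub>C P) Q = c * pair_form P Q"
  using lin_op_scaleC[OF lin_op_UNIV[OF a_bdd]] lin_op_scaleC[OF lin_op_UNIV[OF m_bdd]]
  by (simp add: pair_form_def scaleC_prod_def cinner_scaleC_left distrib_left)

lemma pair_form_add_right: "pair_form P (Q + Q') = pair_form P Q + pair_form P Q'"
  by (simp add: pair_form_def cinner_add_right)

lemma pair_form_scaleC_right: "pair_form P (c *\<^sub>C Q) = cnj c * pair_form P Q"
  by (simp add: pair_form_def scaleC_prod_def cinner_scaleC_right distrib_left)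

lemma pair_form_coercive:
  obtains \<mu> where "\<mu> > 0" "\<And>P. \<mu> * (norm P)\<^sup>2 \<le> Re (pair_form P P)"
proof -
  obtain \<mu>a where \<mu>a: "\<mu>a > 0" "\<And>y. \<mu>a * (norm y)\<^sup>2 \<le> Re (cinner (a y) y)"
    using a_coer by (auto simp: coercive_op_def)
  obtain \<mu>m where \<mu>m: "\<mu>m > 0" "\<And>x. \<mu>m * (norm x)\<^sup>2 \<le> Re (cinner (m x) x)"
    using m_coer by (auto simp: coercive_op_def)
  have "min \<mu>a \<mu>m * (norm P)\<^sup>2 \<le> Re (pair_form P P)" for P
  proof -
    have "min \<mu>a \<mu>m * (norm P)\<^sup>2 = min \<mu>a \<mu>m * (norm (snd P))\<^sup>2 + min \<mu>a \<mu>m * (norm (fst P))\<^sup>2"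
      by (simp add: norm_prod_def distrib_left)
    also have "\<dots> \<le> \<mu>a * (norm (snd P))\<^sup>2 + \<mu>m * (norm (fst P))\<^sup>2"
      by (intro add_mono mult_right_mono) auto
    also have "\<dots> \<le> Re (pair_form P P)"
      using \<mu>a(2)[of "snd P"] \<mu>m(2)[of "fst P"] by (simp add: pair_form_def)
    finally show ?thesis .
  qed
  then show ?thesis using \<mu>a(1) \<mu>m(1) by (intro that[of "min \<mu>a \<mu>m"]) auto
qed

lemma pair_form_bounded:
  obtains C where "\<And>P Q. norm (pair_form P Q) \<le> C * norm P * norm Q"
proof -
  obtain Ka where Ka: "\<And>y. norm (a y) \<le> Ka * norm y" using a_bdd by (auto simp: cbounded_linear_def)
  obtain Km where Km: "\<And>x. norm (m x) \<le> Km * norm x" using m_bdd by (auto simp: cbounded_linear_def)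
  have bound: "norm (cinner (f z) z') \<le> \<bar>K\<bar> * norm P * norm Q"
    if "\<And>z. norm (f z) \<le> K * norm z" "norm z \<le> norm P" "norm z' \<le> norm Q"
    for f :: "'c::complex_inner \<Rightarrow> 'c" and K z z' and P Q :: "'h0 \<times> 'h1"
  proof -
    have "norm (cinner (f z) z') \<le> norm (f z) * norm z'" by (rule cauchy_schwarz)
    also have "\<dots> \<le> (\<bar>K\<bar> * norm z) * norm z'"
      using that(1)[of z] mult_right_mono[OF abs_ge_self[of K] norm_ge_zero[of z]]
      by (intro mult_right_mono) auto
    also have "\<dots> \<le> \<bar>K\<bar> * norm P * norm Q"
      using that(2,3) by (intro mult_mono mult_left_mono) auto
    finally show ?thesis .
  qed
  have fs: "norm (fst P) \<le> norm P" "norm (snd P) \<le> norm P" for P :: "'h0 \<times> 'h1"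
    using norm_fst_le[of "fst P" "snd P"] norm_snd_le[where x = "fst P" and y = "snd P"]
    by simp_all
  have "norm (pair_form P Q) \<le> (\<bar>Ka\<bar> + \<bar>Km\<bar>) * norm P * norm Q" for P Q
    using norm_triangle_le[OF add_mono[OF bound[OF Ka fs(2) fs(2)] bound[OF Km fs(1) fs(1)]]]
    by (simp add: pair_form_def algebra_simps)
  then show ?thesis using that by blast
qed

lemma dtn_form_coercive: "coercive_form domG G dtn_form"
  using pair_form_coercive
  by (metis coercive_form_def dtn_form_pair_form graph_norm_pair)

lemma dtn_form_continuous: "continuous_form domG G dtn_form"
  using pair_form_bounded
  by (metis continuous_form_def dtn_form_pair_form graph_norm_pair)

lemma dtn_form_diff_left:
  "x \<in> domG \<Longrightarrow> y \<in> domG \<Longrightarrow> dtn_form (x - y) v = dtn_form x v - dtn_form y v"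
  using pair_form_add_left[of "(x - y, G x - G y)" "(y, G y)" "(v, G v)"]
  by (simp add: dtn_form_pair_form lin_op_diff[OF lin_op_G])

lemma dtn_form_add_right:
  "x \<in> domG \<Longrightarrow> y \<in> domG \<Longrightarrow> dtn_form u (x + y) = dtn_form u x + dtn_form u y"
  using pair_form_add_right[of "(u, G u)" "(x, G x)" "(y, G y)"]
  by (simp add: dtn_form_pair_form lin_op_add[OF lin_op_G])

text \<open>Weak and strong solutions of \<open>m u - D a G u = 0\<close> coincide: test functions range over
  \<open>dom(G\<^sub>0) = dom(D\<^sup>*)\<close>, on which \<open>G = -D\<^sup>*\<close>.\<close>

lemma weak_solution_strong:
  assumes u: "u \<in> domG" and weak: "\<forall>v\<in>domG0. dtn_form u v = 0"
  shows "a (G u) \<in> domD \<and> D (a (G u)) = m u"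
proof -
  have "cinner (adj domD D y) (a (G u)) = cinner y (m u)" if y: "y \<in> domG0" for y
  proof -
    have "dtn_form u y = 0" using weak y by blast
    then have "cinner (a (G u)) (- adj domD D y) + cinner (m u) y = 0"
      using domG0_G[OF y] by (simp add: dtn_form_def)
    then have "cinner (a (G u)) (adj domD D y) = cinner (m u) y"
      by (simp add: cinner_minus_right add_eq_0_iff)
    then show ?thesis by (metis cinner_commute)
  qed
  then show ?thesis using closed_op_adj_adj[OF D_dd D_closed] by blast
qed

lemma strong_solution_weak:
  assumes "a (G u) \<in> domD" "D (a (G u)) = m u" and v: "v \<in> domG0"
  shows "dtn_form u v = 0"
  using cinner_adj[OF D_dd v assms(1)] domG0_G[OF v] assms(2)
  by (simp add: dtn_form_def cinner_minus_right)

lemma weak_solution_unique: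
  assumes "u \<in> domG" "u' \<in> domG" "u - u' \<in> domG0"
    and "\<forall>v\<in>domG0. dtn_form u v = 0" "\<forall>v\<in>domG0. dtn_form u' v = 0"
  shows "u = u'"
proof -
  obtain \<mu> where \<mu>: "\<mu> > 0" "\<And>P. \<mu> * (norm P)\<^sup>2 \<le> Re (pair_form P P)"
    using pair_form_coercive by blast
  define w where "w = u - u'"
  have "dtn_form w w = 0" using assms dtn_form_diff_left by (simp add: w_def)
  then have "\<mu> * (norm (w, G w))\<^sup>2 \<le> 0" using \<mu>(2)[of "(w, G w)"] by (simp add: dtn_form_pair_form)
  then have "(w, G w) = 0" using \<mu>(1) by (simp add: mult_le_0_iff)
  then show ?thesis by (simp add: w_def zero_prod_def)
qed

lemma dtn_sol_eq:
  assumes u: "u \<in> domG" "u - u0 \<in> domG0" and weak: "\<forall>v\<in>domG0. dtn_form u v = 0"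
  shows "dtn_sol domG G domD D a m u0 = u"
  unfolding dtn_sol_def
proof (rule the_equality)
  show "u \<in> domG \<and> a (G u) \<in> domD \<and> m u - D (a (G u)) = 0 \<and> u - u0 \<in> domG0"
    using u weak_solution_strong[OF u(1) weak] by simp
next
  fix u' assume u': "u' \<in> domG \<and> a (G u') \<in> domD \<and> m u' - D (a (G u')) = 0 \<and> u' - u0 \<in> domG0"
  have "u' - u = (u' - u0) - (u - u0)" by simp
  then have "u' - u \<in> domG0" using csubspace_diff[OF csubspace_adj_dom] u u' by metis
  moreover have "\<forall>v\<in>domG0. dtn_form u' v = 0" using u' strong_solution_weak by simp
  ultimately show "u' = u" using weak_solution_unique u u' weak by blast
qed

lemma weak_solution_exists:
  assumes u0: "u0 \<in> domG"
  obtains u where "u \<in> domG" "u - u0 \<in> domG0" "\<forall>v\<in>domG0. dtn_form u v = 0"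
proof -
  define M where "M = {(x, G x) | x. x \<in> domG0}"
  have subM: "csubspace M"
    unfolding M_def using lin_op_G csubspace_adj_dom domG0_subset by (rule csubspace_graph)
  obtain \<mu> where \<mu>: "\<mu> > 0" "\<And>P. \<mu> * (norm P)\<^sup>2 \<le> Re (pair_form P P)"
    using pair_form_coercive by blast
  obtain C where C: "\<And>P Q. norm (pair_form P Q) \<le> C * norm P * norm Q"
    using pair_form_bounded by blast
  \<comment> \<open>Lax-Milgram for the correction \<open>w = u - u\<^sub>0 \<in> dom(G\<^sub>0)\<close>\<close>
  have "\<exists>W\<in>M. \<forall>V\<in>M. pair_form W V = - pair_form (u0, G u0) V"
    using C[of "(u0, G u0)"]
    by (intro lax_milgram[OF subM closed_graph_domG0[folded M_def] pair_form_add_left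
          pair_form_scaleC_left pair_form_add_right pair_form_scaleC_right C \<mu>(2) \<mu>(1)])
      (simp_all add: pair_form_add_right pair_form_scaleC_right)
  then obtain w where w: "w \<in> domG0" "\<forall>V\<in>M. pair_form (w, G w) V = - pair_form (u0, G u0) V"
    by (auto simp: M_def)
  have wG: "w \<in> domG" using w(1) domG0_subset by blast
  have "dtn_form (u0 + w) v = 0" if "v \<in> domG0" for v
  proof -
    have "(v, G v) \<in> M" using that by (auto simp: M_def)
    then show ?thesis
      using w(2) pair_form_add_left[of "(u0, G u0)" "(w, G w)" "(v, G v)"]
      by (simp add: dtn_form_pair_form lin_op_add[OF lin_op_G u0 wG])
  qed
  then show ?thesis using that csubspace_add[OF lin_op_csubspace[OF lin_op_G] u0 wG] w(1) by simp
qed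

lemma dtn_Lambda:
  assumes u: "u \<in> domG" "u - u0 \<in> domG0" and weak: "\<forall>v\<in>domG0. dtn_form u v = 0"
  shows "dtn_Lambda domG G domD D a m u0 \<in> BD"
    and "v \<in> BG \<Longrightarrow> graph_inner D (dtn_Lambda domG G domD D a m u0) (G v) = dtn_form u v"
proof -
  have sol: "dtn_Lambda domG G domD D a m u0 = orth_proj D BD (a (G u))"
    using dtn_sol_eq[OF u weak] by (simp add: dtn_Lambda_def)
  have strong: "a (G u) \<in> domD" "D (a (G u)) = m u" using weak_solution_strong[OF u(1) weak] by auto
  show "dtn_Lambda domG G domD D a m u0 \<in> BD" using orth_proj_BD_D[OF strong(1)] sol by simp
  show "graph_inner D (dtn_Lambda domG G domD D a m u0) (G v) = dtn_form u v" if "v \<in> BG"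
    using green_BD_G[OF strong(1) that] strong(2) sol by (simp add: dtn_form_def)
qed

lemma dtn_form_orth_proj:
  assumes weak: "\<forall>v\<in>domG0. dtn_form u v = 0" and v: "v \<in> domG"
  shows "dtn_form u v = dtn_form u (orth_proj G BG v)"
proof -
  define p where "p = orth_proj G BG v"
  have p: "p \<in> domG" "v - p \<in> domG0"
    using orth_proj_BD_G[OF v] BD_G_subset by (auto simp: p_def)
  have "dtn_form u v = dtn_form u p + dtn_form u (v - p)"
    using dtn_form_add_right[OF p(1) domG0_subset[THEN subsetD, OF p(2)]] by simp
  then show ?thesis using weak p(2) by (simp add: p_def)
qed

lemma dtn_H_eq_form_op:
  assumes \<kappa>_lin: "clinear_on BG \<kappa>" and \<kappa>_bdd: "\<forall>u \<in> BG. norm (\<kappa> u) \<le> K * graph_norm G u"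
  shows "dtn_H domG G domD D a m \<kappa> = form_op domG dtn_form (\<lambda>u. \<kappa> (orth_proj G BG u))"
proof (intro ext iffI)
  fix x f assume "form_op domG dtn_form (\<lambda>u. \<kappa> (orth_proj G BG u)) x f"
  then obtain u where u: "u \<in> domG" "\<kappa> (orth_proj G BG u) = x"
    and eq: "\<forall>v\<in>domG. dtn_form u v = cinner f (\<kappa> (orth_proj G BG v))"
    by (auto simp: form_op_def)
  define u0 where "u0 = orth_proj G BG u"
  have u0: "u0 \<in> BG" "u - u0 \<in> domG0" using orth_proj_BD_G[OF u(1)] by (simp_all add: u0_def)
  have "\<kappa> 0 = 0"
    using \<kappa>_lin csubspace_0[OF csubspace_BD_G] by (metis clinear_on_def scaleC_zero_left)
  then have weak: "\<forall>v\<in>domG0. dtn_form u v = 0"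
    using eq domG0_subset orth_proj_BD_G_domG0 by auto
  \<comment> \<open>both sides of \<open>\<Lambda> u\<^sub>0 = G \<kappa>\<^sup>* f\<close> lie in \<open>BD(D) = G(BD(G))\<close>; compare them on \<open>G v\<close>\<close>
  have "dtn_Lambda domG G domD D a m u0 = G (kappa_adj domG G domD D \<kappa> f)"
  proof (rule BD_D_eqI)
    show "dtn_Lambda domG G domD D a m u0 \<in> BD" using dtn_Lambda(1)[OF u(1) u0(2) weak] .
    show "G (kappa_adj domG G domD D \<kappa> f) \<in> BD"
      using G_BD_G kappa_adj_is_adjoint[OF \<kappa>_lin \<kappa>_bdd] by blast
    fix v assume v: "v \<in> BG"
    then show "graph_inner D (dtn_Lambda domG G domD D a m u0) (G v)
        = graph_inner D (G (kappa_adj domG G domD D \<kappa> f)) (G v)"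
      using dtn_Lambda(2)[OF u(1) u0(2) weak v] eq BD_G_subset orth_proj_BD_G_BD_G
        graph_inner_G_kappa_adj[OF \<kappa>_lin \<kappa>_bdd v] by auto
  qed
  then show "dtn_H domG G domD D a m \<kappa> x f"
    using u0(1) u(2) by (auto simp: dtn_H_def u0_def)
next
  fix x f assume "dtn_H domG G domD D a m \<kappa> x f"
  then obtain u0 where u0: "u0 \<in> BG" "\<kappa> u0 = x"
    and \<Lambda>: "dtn_Lambda domG G domD D a m u0 = G (kappa_adj domG G domD D \<kappa> f)"
    by (auto simp: dtn_H_def)
  obtain u where u: "u \<in> domG" "u - u0 \<in> domG0" and weak: "\<forall>v\<in>domG0. dtn_form u v = 0"
    using weak_solution_exists u0(1) BD_G_subset by blast
  have "dtn_form u v = cinner f (\<kappa> (orth_proj G BG v))" if v: "v \<in> domG" for v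
  proof -
    have p: "orth_proj G BG v \<in> BG" using orth_proj_BD_G[OF v] by blast
    then show ?thesis
      using dtn_form_orth_proj[OF weak v] dtn_Lambda(2)[OF u weak p] \<Lambda>
        graph_inner_G_kappa_adj[OF \<kappa>_lin \<kappa>_bdd p] by simp
  qed
  moreover have "orth_proj G BG u = u0" using orth_proj_BD_G_unique[OF u(1) u0(1) u(2)] .
  ultimately show "form_op domG dtn_form (\<lambda>u. \<kappa> (orth_proj G BG u)) x f"
    using u(1) u0(2) by (auto simp: form_op_def)
qed

end

theorem proposition3p6:
  fixes domG :: "'h0::chilbert set" and G :: "'h0 \<Rightarrow> 'h1::chilbert"
    and domD :: "'h1 set" and D :: "'h1 \<Rightarrow> 'h0"
    and \<kappa> :: "'h0 \<Rightarrow> 'h::chilbert"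
    and a :: "'h1 \<Rightarrow> 'h1" and m :: "'h0 \<Rightarrow> 'h0"
  assumes G_dd: "densely_defined domG G" and G_closed: "closed_op domG G"
    and D_dd: "densely_defined domD D" and D_closed: "closed_op domD D"
    and GD: "\<forall>y \<in> adj_dom domG G. y \<in> domD \<and> D y = - adj domG G y"
    and \<kappa>_lin: "clinear_on (BD_G domG G domD D) \<kappa>"
    and \<kappa>_bdd: "\<exists>K. \<forall>u \<in> BD_G domG G domD D. norm (\<kappa> u) \<le> K * graph_norm G u"
    and \<kappa>_inj: "inj_on \<kappa> (BD_G domG G domD D)"
    and \<kappa>_dense: "closure (\<kappa> ` BD_G domG G domD D) = UNIV"
    and a_bdd: "cbounded_linear a" and a_coer: "coercive_op a"
    and m_bdd: "cbounded_linear m" and m_coer: "coercive_op m"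
  defines "b \<equiv> \<lambda>u v. cinner (a (G u)) (G v) + cinner (m u) v"
    and "j \<equiv> \<lambda>u. \<kappa> (orth_proj G (BD_G domG G domD D) u)"
  shows "coercive_form domG G b \<and> continuous_form domG G b
    \<and> dtn_H domG G domD D a m \<kappa> = form_op domG b j"
proof -
  interpret dtn_problem domG G domD D a m
    by unfold_locales (fact G_dd G_closed D_dd D_closed GD a_bdd a_coer m_bdd m_coer)+
  have "b = dtn_form" by (simp add: b_def dtn_form_def fun_eq_iff)
  moreover obtain K where "\<forall>u \<in> BD_G domG G domD D. norm (\<kappa> u) \<le> K * graph_norm G u"
    using \<kappa>_bdd by blast
  ultimately show ?thesis
    unfolding j_def using dtn_form_coercive dtn_form_continuous dtn_H_eq_form_op[OF \<kappa>_lin] by simp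
qed

end
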